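(* Let $w\ge1$ and suppose $\alpha_2^2\le\frac{\ln w}{4}$ and $\alpha_1\sqrt w\ge \ln w$. If at a time $t\in[0,T)$ with $a_t^2\le\frac12$ the solution of the guided probability flow ODE satisfies $$x(t)\le \min\Bigl(\frac{\ln w}{16\alpha_2},\ \frac{\alpha_1\sqrt w}{2\beta}\Bigr),$$ then $$x'(t)\ge\frac{a_t\alpha_1\sqrt w}{2\beta b_t^2}.$$
   Context: Let $0<\alpha_1<\alpha_2$ and $\beta\ge1$. Let $p^{(1)}$ and $p^{(-1)}$ be probability densities on $\mathbb R$ supported on $[\alpha_1,\alpha_2]$ and $[-\alpha_2,-\alpha_1]$ respectively, which are $\beta$-bounded with respect to each other: $\frac1\beta\le \frac{p^{(-1)}(x_1)}{p^{(1)}(x_2)}\le\beta$ for all $x_1\in(-\alpha_2,-\alpha_1)$, $x_2\in(\alpha_1,\alpha_2)$. Let $p=\frac12p^{(1)}+\frac12p^{(-1)}$, and let $(X_0,z)$ be jointly distributed with $z$ uniform on $\{\pm1\}$ and $X_0\mid z\sim p^{(z)}$. Fix $T>0$; for $t\in[0,T]$ put $a_t=e^{t-T}$, $b_t=\sqrt{1-a_t^2}$, and $X_t=a_tX_0+\xi_t$ with $\xi_t\sim\mathcal N(0,b_t^2)$ independent of $(X_0,z)$. Let $p_t$ denote the density of $X_t$ and $p_t(\cdot\mid z=\pm1)$ the conditional density of $X_t$ given $z=\pm1$. For a guidance parameter $w\ge0$, the guided probability flow ODE is $x'(t)=x(t)+(w+1)\nabla\log p_t(x(t)\mid z=1)-w\nabla\log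 p_t(x(t))$, $t\in[0,T)$. *)

theory Defs
  imports "HOL-Probability.Probability"
begin

definition sched_a :: "real \<Rightarrow> real \<Rightarrow> real" where
  "sched_a T t = exp (t - T)"

definition sched_b :: "real \<Rightarrow> real \<Rightarrow> real" where
  "sched_b T t = sqrt (1 - (sched_a T t)\<^sup>2)"

definition is_density :: "(real \<Rightarrow> real) \<Rightarrow> bool" where
  "is_density p \<longleftrightarrow> p \<in> borel_measurable lborel \<and> (\<forall>x. 0 \<le> p x)
     \<and> integrable lborel p \<and> (LINT x|lborel. p x) = 1"

text \<open>Density of X_t = a X_0 + xi, xi ~ N(0,b^2) independent, X_0 ~ q.\<close>
definition noised_density :: "(real \<Rightarrow> real) \<Rightarrow> real \<Rightarrow> real \<Rightarrow> real \<Rightarrow> real" where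
  "noised_density q a b x = (LINT y|lborel. q y * normal_density (a * y) b x)"

text \<open>Conditional density p_t(x | z = 1) (given q = p^(1)).\<close>
definition cond_density_t :: "(real \<Rightarrow> real) \<Rightarrow> real \<Rightarrow> real \<Rightarrow> real \<Rightarrow> real" where
  "cond_density_t q T t x = noised_density q (sched_a T t) (sched_b T t) x"

definition marg_density_t :: "(real \<Rightarrow> real) \<Rightarrow> (real \<Rightarrow> real) \<Rightarrow> real \<Rightarrow> real \<Rightarrow> real \<Rightarrow> real" where
  "marg_density_t p1 pm1 T t x = 1/2 * cond_density_t p1 T t x + 1/2 * cond_density_t pm1 T t x"

definition score :: "(real \<Rightarrow> real) \<Rightarrow> real \<Rightarrow> real" where
  "score f x = deriv (\<lambda>u. ln (f u)) x"

definition guided_field :: "(real \<Rightarrow> real) \<Rightarrow> (real \<Rightarrow> real) \<Rightarrow> real \<Rightarrow> real \<Rightarrow> real \<Rightarrow> real \<Rightarrow> real" where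
  "guided_field p1 pm1 T w t x =
     x + (w + 1) * score (cond_density_t p1 T t) x - w * score (marg_density_t p1 pm1 T t) x"

end

theory Submission
  imports Defs
begin

(* Write x for x(t), and let D and D' be the Gaussian-smoothed components p_t(x | z = 1) and
   p_t(x | z = -1), with scores s and s'.  The score of a smoothed density is the posterior mean of
   (a_t y - x) / b_t^2, so the supports give s \<ge> (a_t alpha1 - x) / b_t^2 and
   s' \<le> (-a_t alpha1 - x) / b_t^2.  The marginal score is the D-weighted average of s and s', hence
   the guided field equals x + s + w D' / (D + D') (s - s').  Since a_t, alpha2 and x are small, the
   Gaussian kernel at any point of [alpha1, alpha2] is at most sqrt w times the kernel at any point of
   [-alpha2, -alpha1]; thus D \<le> sqrt w D', the weight D' / (D + D') is at least 1 / (sqrt w + 1), and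
   the bound follows by elementary algebra. *)

section \<open>Differentiation under the integral sign\<close>

lemma has_real_derivative_quadratic_remainder:
  fixes f :: "real \<Rightarrow> real"
  assumes remainder: "\<And>h. \<bar>f (x + h) - f x - h * D\<bar> \<le> C * h\<^sup>2"
  shows "(f has_real_derivative D) (at x)"
proof -
  have "\<bar>(f (x + h) - f x) / h - D\<bar> \<le> \<bar>C\<bar> * \<bar>h\<bar>" if "h \<noteq> 0" for h
  proof -
    have "\<bar>(f (x + h) - f x) / h - D\<bar> = \<bar>f (x + h) - f x - h * D\<bar> / \<bar>h\<bar>"
      using that by (simp add: field_simps)
    also have "\<dots> \<le> C * h\<^sup>2 / \<bar>h\<bar>"
      using remainder by (intro divide_right_mono) auto
    also have "\<dots> = C * \<bar>h\<bar>"
      using that by (subst power2_abs[symmetric]) (simp add: power2_eq_square del: abs_mult_self_eq)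
    also have "\<dots> \<le> \<bar>C\<bar> * \<bar>h\<bar>"
      by (simp add: mult_right_mono)
    finally show ?thesis .
  qed
  then have "\<forall>\<^sub>F h in at 0. norm ((f (x + h) - f x) / h - D) \<le> \<bar>C\<bar> * \<bar>h\<bar>"
    by (auto simp: eventually_at_filter)
  moreover have "((\<lambda>h. \<bar>C\<bar> * \<bar>h\<bar>) \<longlongrightarrow> 0) (at 0)"
    by (auto intro!: tendsto_eq_intros)
  ultimately have "((\<lambda>h. (f (x + h) - f x) / h - D) \<longlongrightarrow> 0) (at 0)"
    by (rule Lim_null_comparison)
  then show ?thesis
    unfolding DERIV_def by (simp add: LIM_zero_iff)
qed

lemma quadratic_remainder_le:
  fixes f f' f'' :: "real \<Rightarrow> real"
  assumes "\<And>s. (f has_real_derivative f' s) (at s)"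
    and "\<And>s. (f' has_real_derivative f'' s) (at s)"
    and "\<And>s. \<bar>f'' s\<bar> \<le> M"
  shows "\<bar>f (x + h) - f x - h * f' x\<bar> \<le> M / 2 * h\<^sup>2"
proof (cases "h = 0")
  case False
  define d where "d m = (if m = 0 then f else if m = 1 then f' else f'')" for m :: nat
  have "\<forall>m s. m < 2 \<and> min x (x + h) \<le> s \<and> s \<le> max x (x + h) \<longrightarrow> (d m has_real_derivative d (Suc m) s) (at s)"
    using assms(1,2) by (auto simp: d_def less_2_cases_iff)
  then obtain s where "f (x + h) = (\<Sum>m<2. d m x / fact m * (x + h - x) ^ m) + d 2 s / fact 2 * (x + h - x)\<^sup>2"
    using Taylor[of 2 d f "min x (x + h)" "max x (x + h)" x "x + h"] False by (auto simp: d_def)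
  then have "\<bar>f (x + h) - f x - h * f' x\<bar> = \<bar>f'' s\<bar> / 2 * h\<^sup>2"
    by (simp add: d_def numeral_2_eq_2 abs_mult)
  also have "\<dots> \<le> M / 2 * h\<^sup>2"
    using assms(3)[of s] by (intro mult_right_mono divide_right_mono) auto
  finally show ?thesis .
qed simp

lemma integrable_mult_bounded:
  fixes p g :: "real \<Rightarrow> real"
  assumes "integrable lborel p" and "g \<in> borel_measurable lborel" and "\<And>y. \<bar>g y\<bar> \<le> B"
  shows "integrable lborel (\<lambda>y. p y * g y)"
proof (rule Bochner_Integration.integrable_bound[where f = "\<lambda>y. B * p y"])
  show "integrable lborel (\<lambda>y. B * p y)"
    using assms(1) by simp
  show "(\<lambda>y. p y * g y) \<in> borel_measurable lborel"
    using assms(1,2) by measurable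
  show "AE y in lborel. norm (p y * g y) \<le> norm (B * p y)"
  proof (rule AE_I2)
    fix y
    have "\<bar>g y\<bar> \<le> \<bar>B\<bar>"
      using assms(3)[of y] by linarith
    then show "norm (p y * g y) \<le> norm (B * p y)"
      by (simp add: abs_mult mult.commute[of "\<bar>p y\<bar>"] mult_right_mono)
  qed
qed

lemma integral_mono_on_support:
  fixes q f g :: "real \<Rightarrow> real"
  assumes "\<And>y. 0 \<le> q y"
    and "integrable lborel (\<lambda>y. q y * f y)" and "integrable lborel (\<lambda>y. q y * g y)"
    and "\<And>y. q y \<noteq> 0 \<Longrightarrow> f y \<le> g y"
  shows "(LINT y|lborel. q y * f y) \<le> (LINT y|lborel. q y * g y)"
proof (rule integral_mono[OF assms(2,3)])
  show "q y * f y \<le> q y * g y" for y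
    using assms(1,4)[of y] by (cases "q y = 0") (auto intro: mult_left_mono)
qed

lemma has_real_derivative_integral_kernel:
  fixes p k' :: "real \<Rightarrow> real" and k :: "real \<Rightarrow> real \<Rightarrow> real"
  assumes p: "integrable lborel p"
    and k_meas: "\<And>u. k u \<in> borel_measurable lborel" and k'_meas: "k' \<in> borel_measurable lborel"
    and k_bound: "\<And>u y. \<bar>k u y\<bar> \<le> B" and k'_bound: "\<And>y. \<bar>k' y\<bar> \<le> B"
    and remainder: "\<And>h y. \<bar>k (x + h) y - k x y - h * k' y\<bar> \<le> M * h\<^sup>2"
  shows "((\<lambda>u. LINT y|lborel. p y * k u y) has_real_derivative (LINT y|lborel. p y * k' y)) (at x)"
proof (rule has_real_derivative_quadratic_remainder[where C = "M * (LINT y|lborel. \<bar>p y\<bar>)"])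
  fix h
  have int_k: "integrable lborel (\<lambda>y. p y * k u y)" for u
    using integrable_mult_bounded[OF p k_meas k_bound] .
  have int_k': "integrable lborel (\<lambda>y. p y * k' y)"
    using integrable_mult_bounded[OF p k'_meas k'_bound] .
  have int_remainder: "integrable lborel (\<lambda>y. p y * (k (x + h) y - k x y - h * k' y))"
    by (intro integrable_mult_bounded[OF p _ remainder] borel_measurable_diff borel_measurable_times
        borel_measurable_const k_meas k'_meas)
  have "(LINT y|lborel. p y * k (x + h) y) - (LINT y|lborel. p y * k x y) - h * (LINT y|lborel. p y * k' y)
      = (LINT y|lborel. p y * (k (x + h) y - k x y - h * k' y))"
    using int_k int_k' by (simp add: algebra_simps)
  also have "\<bar>\<dots>\<bar> \<le> (LINT y|lborel. \<bar>p y\<bar> * (M * h\<^sup>2))"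
    using int_remainder p
    by (intro integral_abs_bound_integral) (auto simp: abs_mult remainder intro!: mult_left_mono)
  also have "\<dots> = M * (LINT y|lborel. \<bar>p y\<bar>) * h\<^sup>2"
    by (simp add: algebra_simps)
  finally show "\<bar>(LINT y|lborel. p y * k (x + h) y) - (LINT y|lborel. p y * k x y)
      - h * (LINT y|lborel. p y * k' y)\<bar> \<le> M * (LINT y|lborel. \<bar>p y\<bar>) * h\<^sup>2" .
qed

section \<open>Gaussian kernel\<close>

lemma one_plus_mult_exp_minus_le: "0 \<le> t \<Longrightarrow> (1 + t) * exp (- t) \<le> (1::real)"
  using mult_right_mono[OF exp_ge_add_one_self[of t], of "exp (- t)"] by (simp add: exp_minus_inverse)

lemma normal_density_le: "normal_density \<mu> \<sigma> x \<le> 1 / sqrt (2 * pi * \<sigma>\<^sup>2)"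
  unfolding normal_density_def by (intro mult_left_le) auto

lemma normal_density_has_real_derivative:
  assumes "0 < \<sigma>"
  shows "(normal_density \<mu> \<sigma> has_real_derivative (\<mu> - x) / \<sigma>\<^sup>2 * normal_density \<mu> \<sigma> x) (at x)"
proof -
  have "((\<lambda>x. - (x - \<mu>)\<^sup>2 / (2 * \<sigma>\<^sup>2)) has_real_derivative (\<mu> - x) / \<sigma>\<^sup>2) (at x)"
    using assms by (auto intro!: derivative_eq_intros simp: field_simps power2_eq_square)
  from DERIV_cmult[OF DERIV_fun_exp[OF this], of "1 / sqrt (2 * pi * \<sigma>\<^sup>2)"] show ?thesis
    by (simp add: normal_density_def[abs_def] ac_simps)
qed

lemma normal_density_deriv_has_real_derivative:
  assumes "0 < \<sigma>"
  shows "((\<lambda>x. (\<mu> - x) / \<sigma>\<^sup>2 * normal_density \<mu> \<sigma> x) has_real_derivative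
           ((\<mu> - x)\<^sup>2 / \<sigma>\<^sup>2 - 1) / \<sigma>\<^sup>2 * normal_density \<mu> \<sigma> x) (at x)"
  using assms
  by (auto intro!: derivative_eq_intros normal_density_has_real_derivative simp: field_simps power2_eq_square)

lemma abs_normal_density_deriv_le:
  assumes "0 < \<sigma>"
  shows "\<bar>(\<mu> - x) / \<sigma>\<^sup>2 * normal_density \<mu> \<sigma> x\<bar> \<le> 1 / (\<sigma> * sqrt (2 * pi * \<sigma>\<^sup>2))"
proof -
  define c where "c = 1 / sqrt (2 * pi * \<sigma>\<^sup>2)"
  define t where "t = (x - \<mu>)\<^sup>2 / (2 * \<sigma>\<^sup>2)"
  have c: "0 < c" and t: "0 \<le> t"
    using assms by (simp_all add: c_def t_def)
  have "2 * \<sigma> * \<bar>\<mu> - x\<bar> \<le> 2 * \<sigma>\<^sup>2 + (\<mu> - x)\<^sup>2"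
    using sum_squares_bound[of \<sigma> "\<bar>\<mu> - x\<bar>"] zero_le_power2[of \<sigma>]
    by (simp only: power2_abs)
  then have "\<bar>\<mu> - x\<bar> \<le> (2 * \<sigma>\<^sup>2 + (\<mu> - x)\<^sup>2) / (2 * \<sigma>)"
    using assms by (simp add: pos_le_divide_eq mult_ac)
  also have "\<dots> = \<sigma> * (1 + t)"
    using assms by (simp add: t_def field_simps power2_eq_square)
  finally have "\<bar>\<mu> - x\<bar> \<le> \<sigma> * (1 + t)" .
  then have "\<bar>(\<mu> - x) / \<sigma>\<^sup>2 * normal_density \<mu> \<sigma> x\<bar> \<le> \<sigma> * (1 + t) / \<sigma>\<^sup>2 * c * exp (- t)"
    using c by (simp add: normal_density_def c_def t_def abs_mult divide_right_mono mult_right_mono)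
  also have "\<dots> = c / \<sigma> * ((1 + t) * exp (- t))"
    using assms by (simp add: power2_eq_square)
  also have "\<dots> \<le> c / \<sigma>"
    using assms c one_plus_mult_exp_minus_le[OF t] by (intro mult_left_le) auto
  finally show ?thesis
    by (simp add: c_def mult.commute)
qed

lemma abs_normal_density_deriv2_le:
  assumes "0 < \<sigma>"
  shows "\<bar>((\<mu> - x)\<^sup>2 / \<sigma>\<^sup>2 - 1) / \<sigma>\<^sup>2 * normal_density \<mu> \<sigma> x\<bar> \<le> 2 / (\<sigma>\<^sup>2 * sqrt (2 * pi * \<sigma>\<^sup>2))"
proof -
  define c where "c = 1 / sqrt (2 * pi * \<sigma>\<^sup>2)"
  define t where "t = (x - \<mu>)\<^sup>2 / (2 * \<sigma>\<^sup>2)"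
  have c: "0 < c" and t: "0 \<le> t"
    using assms by (simp_all add: c_def t_def)
  have "\<bar>(\<mu> - x)\<^sup>2 / \<sigma>\<^sup>2 - 1\<bar> \<le> (\<mu> - x)\<^sup>2 / \<sigma>\<^sup>2 + 1"
    by (simp add: abs_le_iff)
  also have "\<dots> \<le> 2 * (1 + t)"
    using assms by (simp add: t_def power2_commute[of x] field_simps)
  finally have "\<bar>(\<mu> - x)\<^sup>2 / \<sigma>\<^sup>2 - 1\<bar> \<le> 2 * (1 + t)" .
  then have "\<bar>((\<mu> - x)\<^sup>2 / \<sigma>\<^sup>2 - 1) / \<sigma>\<^sup>2 * normal_density \<mu> \<sigma> x\<bar> \<le> 2 * (1 + t) / \<sigma>\<^sup>2 * c * exp (- t)"
    using c by (simp add: normal_density_def c_def t_def abs_mult divide_right_mono mult_right_mono)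
  also have "\<dots> = 2 * c / \<sigma>\<^sup>2 * ((1 + t) * exp (- t))"
    by simp
  also have "\<dots> \<le> 2 * c / \<sigma>\<^sup>2"
    using assms c one_plus_mult_exp_minus_le[OF t] by (intro mult_left_le) auto
  finally show ?thesis
    by (simp add: c_def mult.commute)
qed

lemma normal_density_quadratic_remainder:
  assumes "0 < \<sigma>"
  shows "\<bar>normal_density \<mu> \<sigma> (x + h) - normal_density \<mu> \<sigma> x - h * ((\<mu> - x) / \<sigma>\<^sup>2 * normal_density \<mu> \<sigma> x)\<bar>
           \<le> h\<^sup>2 / (\<sigma>\<^sup>2 * sqrt (2 * pi * \<sigma>\<^sup>2))"
  using quadratic_remainder_le[where f = "normal_density \<mu> \<sigma>"
      and f' = "\<lambda>x. (\<mu> - x) / \<sigma>\<^sup>2 * normal_density \<mu> \<sigma> x"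
      and f'' = "\<lambda>x. ((\<mu> - x)\<^sup>2 / \<sigma>\<^sup>2 - 1) / \<sigma>\<^sup>2 * normal_density \<mu> \<sigma> x", OF
      normal_density_has_real_derivative[OF assms] normal_density_deriv_has_real_derivative[OF assms]
      abs_normal_density_deriv2_le[OF assms]]
  by simp

lemma normal_density_le_exp_mult:
  assumes "0 < \<sigma>" and "(x - \<mu>')\<^sup>2 - (x - \<mu>)\<^sup>2 \<le> 2 * \<sigma>\<^sup>2 * L"
  shows "normal_density \<mu> \<sigma> x \<le> exp L * normal_density \<mu>' \<sigma> x"
proof -
  have "- (x - \<mu>)\<^sup>2 / (2 * \<sigma>\<^sup>2) \<le> L + - (x - \<mu>')\<^sup>2 / (2 * \<sigma>\<^sup>2)"
    using assms by (simp add: field_simps)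
  then have "exp (- (x - \<mu>)\<^sup>2 / (2 * \<sigma>\<^sup>2)) \<le> exp L * exp (- (x - \<mu>')\<^sup>2 / (2 * \<sigma>\<^sup>2))"
    by (simp flip: exp_add)
  then show ?thesis
    by (simp add: normal_density_def divide_right_mono)
qed

section \<open>Smoothed densities and their scores\<close>

definition noised_density_deriv :: "(real \<Rightarrow> real) \<Rightarrow> real \<Rightarrow> real \<Rightarrow> real \<Rightarrow> real" where
  "noised_density_deriv q a b x = (LINT y|lborel. q y * ((a * y - x) / b\<^sup>2 * normal_density (a * y) b x))"

lemma integrable_mult_normal_density:
  assumes "integrable lborel q"
  shows "integrable lborel (\<lambda>y. q y * normal_density (a * y) b x)"
proof (rule integrable_mult_bounded[OF assms])
  show "(\<lambda>y. normal_density (a * y) b x) \<in> borel_measurable lborel"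
    by (simp add: normal_density_def)
  show "\<bar>normal_density (a * y) b x\<bar> \<le> 1 / sqrt (2 * pi * b\<^sup>2)" for y
    using normal_density_le by simp
qed

lemma integrable_mult_normal_density_deriv:
  assumes "0 < b" and "integrable lborel q"
  shows "integrable lborel (\<lambda>y. q y * ((a * y - x) / b\<^sup>2 * normal_density (a * y) b x))"
  by (rule integrable_mult_bounded[OF assms(2) _ abs_normal_density_deriv_le[OF assms(1)]])
    (simp add: normal_density_def)

lemma has_real_derivative_noised_density:
  assumes b: "0 < b" and q: "integrable lborel q"
  shows "(noised_density q a b has_real_derivative noised_density_deriv q a b x) (at x)"
proof -
  define c where "c = 1 / sqrt (2 * pi * b\<^sup>2)"
  have c: "0 < c"
    using b by (simp add: c_def)
  have "((\<lambda>u. LINT y|lborel. q y * normal_density (a * y) b u) has_real_derivative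
          noised_density_deriv q a b x) (at x)"
    unfolding noised_density_deriv_def
  proof (rule has_real_derivative_integral_kernel[OF q, where B = "c + c / b" and M = "c / b\<^sup>2"])
    show "(\<lambda>y. normal_density (a * y) b u) \<in> borel_measurable lborel" for u
      unfolding normal_density_def by measurable
    show "(\<lambda>y. (a * y - x) / b\<^sup>2 * normal_density (a * y) b x) \<in> borel_measurable lborel"
      unfolding normal_density_def by measurable
    show "\<bar>normal_density (a * y) b u\<bar> \<le> c + c / b" for u y
      using normal_density_le[of "a * y" b u] b c by (simp add: c_def[symmetric] add_increasing2)
    have "1 / (b * sqrt (2 * pi * b\<^sup>2)) = c / b"
      by (simp add: c_def)
    then show "\<bar>(a * y - x) / b\<^sup>2 * normal_density (a * y) b x\<bar> \<le> c + c / b" for y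
      using abs_normal_density_deriv_le[OF b, of "a * y" x] c by linarith
    show "\<bar>normal_density (a * y) b (x + h) - normal_density (a * y) b x
            - h * ((a * y - x) / b\<^sup>2 * normal_density (a * y) b x)\<bar> \<le> c / b\<^sup>2 * h\<^sup>2" for h y
      using normal_density_quadratic_remainder[OF b, of "a * y" x h] by (simp add: c_def mult.commute)
  qed
  then show ?thesis
    by (simp add: noised_density_def[abs_def])
qed

lemma noised_density_pos:
  assumes q: "is_density q" and b: "0 < b"
  shows "0 < noised_density q a b x"
proof -
  have int: "integrable lborel (\<lambda>y. q y * normal_density (a * y) b x)"
    using q by (intro integrable_mult_normal_density) (simp add: is_density_def)
  have nonneg: "0 \<le> q y * normal_density (a * y) b x" for y
    using q by (simp add: is_density_def)
  have "noised_density q a b x \<noteq> 0"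
  proof
    assume "noised_density q a b x = 0"
    then have "AE y in lborel. q y * normal_density (a * y) b x = 0"
      using int nonneg by (simp add: noised_density_def integral_nonneg_eq_0_iff_AE)
    then have "AE y in lborel. q y = 0"
      by eventually_elim (metis mult_eq_0_iff normal_density_pos[OF b] less_irrefl)
    then have "(LINT y|lborel. q y) = 0"
      by (simp add: integral_eq_zero_AE)
    then show False
      using q by (simp add: is_density_def)
  qed
  moreover have "0 \<le> noised_density q a b x"
    using nonneg by (simp add: noised_density_def)
  ultimately show ?thesis
    by simp
qed

lemma noised_density_le_mult:
  assumes p: "is_density p" and q: "is_density q"
    and kernel: "\<And>y y'. p y \<noteq> 0 \<Longrightarrow> q y' \<noteq> 0 \<Longrightarrow> normal_density (a * y) b x \<le> C * normal_density (a * y') b x"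
  shows "noised_density p a b x \<le> C * noised_density q a b x"
proof -
  have p_int: "integrable lborel p" and p_nonneg: "\<And>y. 0 \<le> p y"
    and q_int: "integrable lborel q" and q_nonneg: "\<And>y. 0 \<le> q y"
    using p q by (simp_all add: is_density_def)
  have pointwise: "noised_density p a b x \<le> C * normal_density (a * y') b x" if "q y' \<noteq> 0" for y'
  proof -
    have "noised_density p a b x \<le> (LINT y|lborel. p y * (C * normal_density (a * y') b x))"
      unfolding noised_density_def
      using kernel that p_int
      by (intro integral_mono_on_support[OF p_nonneg integrable_mult_normal_density[OF p_int]]) auto
    then show ?thesis
      using p by (simp add: is_density_def)
  qed
  have "noised_density p a b x = (LINT y'|lborel. q y' * noised_density p a b x)"
    using q by (simp add: is_density_def)
  also have "\<dots> \<le> (LINT y'|lborel. q y' * (C * normal_density (a * y') b x))"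
    using pointwise q_int integrable_mult_right[OF integrable_mult_normal_density[OF q_int, of a b x], of C]
    by (intro integral_mono_on_support[OF q_nonneg]) (auto simp: ac_simps)
  also have "\<dots> = C * noised_density q a b x"
    unfolding noised_density_def integral_mult_right_zero[symmetric] by (simp only: ac_simps)
  finally show ?thesis .
qed

lemma score_eq:
  assumes "(f has_real_derivative D) (at x)" and "0 < f x"
  shows "score f x = D / f x"
proof -
  have "((\<lambda>u. ln (f u)) has_real_derivative 1 / f x * D) (at x)"
    by (rule DERIV_chain2[OF DERIV_ln_divide[OF assms(2)] assms(1)])
  then show ?thesis
    unfolding score_def by (simp add: DERIV_imp_deriv)
qed

lemma score_noised_density:
  assumes "is_density q" and "0 < b"
  shows "score (noised_density q a b) x = noised_density_deriv q a b x / noised_density q a b x"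
  using assms
  by (intro score_eq has_real_derivative_noised_density noised_density_pos) (simp_all add: is_density_def)

lemma score_mixture:
  assumes "(f has_real_derivative f') (at x)" and "(g has_real_derivative g') (at x)"
    and "0 < f x" and "0 < g x"
  shows "score (\<lambda>u. 1/2 * f u + 1/2 * g u) x = (f x * score f x + g x * score g x) / (f x + g x)"
proof -
  have "score (\<lambda>u. 1/2 * f u + 1/2 * g u) x = (1/2 * f' + 1/2 * g') / (1/2 * f x + 1/2 * g x)"
    using assms by (intro score_eq DERIV_add DERIV_cmult) auto
  also have "\<dots> = (f x * (f' / f x) + g x * (g' / g x)) / (f x + g x)"
    using assms(3,4) by (simp add: field_simps)
  finally show ?thesis
    using assms by (simp add: score_eq)
qed

lemma score_noised_density_ge:
  assumes q: "is_density q" and a: "0 \<le> a" and b: "0 < b" and supp: "\<And>y. q y \<noteq> 0 \<Longrightarrow> c \<le> y"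
  shows "(a * c - x) / b\<^sup>2 \<le> score (noised_density q a b) x"
proof -
  have q_int: "integrable lborel q" and q_nonneg: "\<And>y. 0 \<le> q y"
    using q by (simp_all add: is_density_def)
  have "(a * c - x) / b\<^sup>2 * noised_density q a b x
      = (LINT y|lborel. q y * ((a * c - x) / b\<^sup>2 * normal_density (a * y) b x))"
    unfolding noised_density_def integral_mult_right_zero[symmetric] by (simp only: ac_simps)
  also have "\<dots> \<le> noised_density_deriv q a b x"
    unfolding noised_density_deriv_def
  proof (rule integral_mono_on_support[OF q_nonneg])
    show "integrable lborel (\<lambda>y. q y * ((a * c - x) / b\<^sup>2 * normal_density (a * y) b x))"
      using integrable_mult_right[OF integrable_mult_normal_density[OF q_int, of a b x], of "(a * c - x) / b\<^sup>2"]
      by (simp only: ac_simps)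
    show "integrable lborel (\<lambda>y. q y * ((a * y - x) / b\<^sup>2 * normal_density (a * y) b x))"
      by (rule integrable_mult_normal_density_deriv[OF b q_int])
    show "(a * c - x) / b\<^sup>2 * normal_density (a * y) b x \<le> (a * y - x) / b\<^sup>2 * normal_density (a * y) b x"
      if "q y \<noteq> 0" for y
      using supp[OF that] a by (intro mult_right_mono divide_right_mono) (auto intro: mult_left_mono)
  qed
  finally show ?thesis
    using noised_density_pos[OF q b] by (simp add: score_noised_density[OF q b] pos_le_divide_eq)
qed

lemma score_noised_density_le:
  assumes q: "is_density q" and a: "0 \<le> a" and b: "0 < b" and supp: "\<And>y. q y \<noteq> 0 \<Longrightarrow> y \<le> c"
  shows "score (noised_density q a b) x \<le> (a * c - x) / b\<^sup>2"
proof -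
  have q_int: "integrable lborel q" and q_nonneg: "\<And>y. 0 \<le> q y"
    using q by (simp_all add: is_density_def)
  have "noised_density_deriv q a b x
      \<le> (LINT y|lborel. q y * ((a * c - x) / b\<^sup>2 * normal_density (a * y) b x))"
    unfolding noised_density_deriv_def
  proof (rule integral_mono_on_support[OF q_nonneg])
    show "integrable lborel (\<lambda>y. q y * ((a * c - x) / b\<^sup>2 * normal_density (a * y) b x))"
      using integrable_mult_right[OF integrable_mult_normal_density[OF q_int, of a b x], of "(a * c - x) / b\<^sup>2"]
      by (simp only: ac_simps)
    show "integrable lborel (\<lambda>y. q y * ((a * y - x) / b\<^sup>2 * normal_density (a * y) b x))"
      by (rule integrable_mult_normal_density_deriv[OF b q_int])
    show "(a * y - x) / b\<^sup>2 * normal_density (a * y) b x \<le> (a * c - x) / b\<^sup>2 * normal_density (a * y) b x"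
      if "q y \<noteq> 0" for y
      using supp[OF that] a by (intro mult_right_mono divide_right_mono) (auto intro: mult_left_mono)
  qed
  also have "\<dots> = (a * c - x) / b\<^sup>2 * noised_density q a b x"
    unfolding noised_density_def integral_mult_right_zero[symmetric] by (simp only: ac_simps)
  finally show ?thesis
    using noised_density_pos[OF q b] by (simp add: score_noised_density[OF q b] pos_divide_le_eq)
qed

section \<open>The guided field\<close>

lemma square_shift_diff_le:
  fixes a X y y' \<alpha> L :: real
  assumes a: "0 < a" "a \<le> 1" "a\<^sup>2 \<le> 1/2" and \<alpha>: "0 < \<alpha>"
    and y: "0 \<le> y" "y \<le> \<alpha>" and y': "-\<alpha> \<le> y'" "y' \<le> 0"
    and L: "\<alpha>\<^sup>2 \<le> L / 4" and X: "X \<le> L / (16 * \<alpha>)"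
  shows "(X - a * y')\<^sup>2 - (X - a * y)\<^sup>2 \<le> L / 2"
proof -
  have "(X - a * y')\<^sup>2 - (X - a * y)\<^sup>2 = 2 * (a * X) * (y - y') + a\<^sup>2 * (y'\<^sup>2 - y\<^sup>2)"
    by (simp add: power2_eq_square algebra_simps)
  moreover have "2 * (a * X) * (y - y') \<le> L / 4"
  proof (cases "X \<le> 0")
    case True
    then have "2 * (a * X) * (y - y') \<le> 0"
      using a y y' by (simp add: mult_nonpos_nonneg mult_nonneg_nonpos)
    then show ?thesis
      using L zero_le_power2[of \<alpha>] by linarith
  next
    case False
    then have "a * X \<le> X"
      using a by (simp add: mult_le_cancel_right1)
    then have "2 * (a * X) * (y - y') \<le> 2 * X * (2 * \<alpha>)"
      using False y y' a(1) by (intro mult_mono) auto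
    also have "\<dots> \<le> L / 4"
      using X \<alpha> by (simp add: field_simps)
    finally show ?thesis .
  qed
  moreover have "a\<^sup>2 * (y'\<^sup>2 - y\<^sup>2) \<le> 1/2 * \<alpha>\<^sup>2"
  proof -
    have "\<bar>y'\<bar> \<le> \<bar>\<alpha>\<bar>"
      using y' \<alpha> by linarith
    then have "y'\<^sup>2 - y\<^sup>2 \<le> \<alpha>\<^sup>2"
      using zero_le_power2[of y] by (simp only: abs_le_square_iff)
    then have "a\<^sup>2 * (y'\<^sup>2 - y\<^sup>2) \<le> a\<^sup>2 * \<alpha>\<^sup>2"
      by (intro mult_left_mono) auto
    also have "\<dots> \<le> 1/2 * \<alpha>\<^sup>2"
      using a(3) by (rule mult_right_mono) simp
    finally show ?thesis .
  qed
  ultimately show ?thesis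
    using L zero_le_power2[of \<alpha>] by linarith
qed

lemma noised_density_ratio_le_sqrt:
  fixes p q :: "real \<Rightarrow> real" and a b X \<alpha> w :: real
  assumes p: "is_density p" and q: "is_density q"
    and supp_p: "\<And>y. p y \<noteq> 0 \<Longrightarrow> 0 \<le> y \<and> y \<le> \<alpha>" and supp_q: "\<And>y. q y \<noteq> 0 \<Longrightarrow> -\<alpha> \<le> y \<and> y \<le> 0"
    and a: "0 < a" "a \<le> 1" "a\<^sup>2 \<le> 1/2" and b: "0 < b" "b\<^sup>2 = 1 - a\<^sup>2"
    and w: "1 \<le> w" and \<alpha>: "0 < \<alpha>" "\<alpha>\<^sup>2 \<le> ln w / 4" and X: "X \<le> ln w / (16 * \<alpha>)"
  shows "noised_density p a b X \<le> sqrt w * noised_density q a b X"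
proof (rule noised_density_le_mult[OF p q])
  have ln_w: "0 \<le> ln w"
    using w by simp
  have exp_half_ln_w: "exp (ln w / 2) = sqrt w"
    using w by (subst powr_half_sqrt[symmetric]) (simp_all add: powr_def)
  fix y y' assume "p y \<noteq> 0" and "q y' \<noteq> 0"
  then have "(X - a * y')\<^sup>2 - (X - a * y)\<^sup>2 \<le> ln w / 2"
    using supp_p supp_q a \<alpha> X by (intro square_shift_diff_le) auto
  also have "\<dots> \<le> 2 * b\<^sup>2 * (ln w / 2)"
    using mult_right_mono[of 1 "2 * b\<^sup>2" "ln w / 2"] b(2) a(3) ln_w by simp
  finally have "normal_density (a * y) b X \<le> exp (ln w / 2) * normal_density (a * y') b X"
    by (rule normal_density_le_exp_mult[OF b(1)])
  then show "normal_density (a * y) b X \<le> sqrt w * normal_density (a * y') b X"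
    by (simp only: exp_half_ln_w)
qed

lemma guided_field_eq_scores:
  fixes p1 pm1 :: "real \<Rightarrow> real" and T w t x :: real
  defines "f \<equiv> \<lambda>q. cond_density_t q T t"
  assumes "is_density p1" and "is_density pm1" and "0 < sched_b T t"
  shows "guided_field p1 pm1 T w t x
    = x + (w + 1) * score (f p1) x
        - w * ((f p1 x * score (f p1) x + f pm1 x * score (f pm1) x) / (f p1 x + f pm1 x))"
proof -
  have "(f q has_real_derivative noised_density_deriv q (sched_a T t) (sched_b T t) x) (at x)"
    and "0 < f q x" if "is_density q" for q
    using that assms(4) unfolding f_def cond_density_t_def
    by (simp_all add: is_density_def has_real_derivative_noised_density noised_density_pos)
  then have "score (\<lambda>u. 1/2 * f p1 u + 1/2 * f pm1 u) x
      = (f p1 x * score (f p1) x + f pm1 x * score (f pm1) x) / (f p1 x + f pm1 x)"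
    using assms(2,3) by (intro score_mixture)
  then show ?thesis
    by (simp add: guided_field_def marg_density_t_def[abs_def] f_def)
qed

lemma weighted_gap_ge:
  fixes D1 Dm r \<kappa> g :: real
  assumes "0 < D1" and "0 < Dm" and "D1 \<le> r * Dm" and "1 \<le> r" and "0 \<le> \<kappa>" and "2 * \<kappa> \<le> g"
  shows "\<kappa> * r \<le> r\<^sup>2 * (Dm / (D1 + Dm)) * g"
proof -
  have weight: "1 / (r + 1) \<le> Dm / (D1 + Dm)"
    using assms by (simp add: field_simps)
  have "r \<le> r\<^sup>2 * (1 / (r + 1)) * 2"
    using assms(4) by (simp add: field_simps power2_eq_square)
  then have "r * \<kappa> \<le> r\<^sup>2 * (1 / (r + 1)) * 2 * \<kappa>"
    using assms(5) by (rule mult_right_mono)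
  then have "\<kappa> * r \<le> r\<^sup>2 * (1 / (r + 1)) * (2 * \<kappa>)"
    by (simp only: ac_simps)
  also have "\<dots> \<le> r\<^sup>2 * (Dm / (D1 + Dm)) * g"
    using weight assms by (intro mult_mono mult_left_mono) auto
  finally show ?thesis .
qed

lemma guided_score_combination_ge:
  fixes X s1 sm D1 Dm w a b2 \<alpha> \<beta> :: real
  assumes D1: "0 < D1" and Dm: "0 < Dm" and ratio: "D1 \<le> sqrt w * Dm" and w: "1 \<le> w"
    and a: "0 < a" "a \<le> 1" and b2: "b2 = 1 - a\<^sup>2" "0 < b2" and \<alpha>: "0 < \<alpha>" and \<beta>: "1 \<le> \<beta>"
    and s1: "(a * \<alpha> - X) / b2 \<le> s1" and sm: "sm \<le> (- a * \<alpha> - X) / b2"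
    and X: "X \<le> \<alpha> * sqrt w / (2 * \<beta>)"
  shows "a * \<alpha> * sqrt w / (2 * \<beta> * b2) \<le> X + (w + 1) * s1 - w * ((D1 * s1 + Dm * sm) / (D1 + Dm))"
proof -
  define r \<kappa> where "r = sqrt w" and "\<kappa> = a * \<alpha> / b2"
  have r: "1 \<le> r" and w_eq: "w = r\<^sup>2"
    using w by (simp_all add: r_def)
  have \<kappa>: "0 < \<kappa>"
    using a \<alpha> b2 by (simp add: \<kappa>_def)
  have "2 * \<kappa> = (a * \<alpha> - X) / b2 - (- a * \<alpha> - X) / b2"
    by (simp add: \<kappa>_def diff_divide_distrib)
  also have "\<dots> \<le> s1 - sm"
    using s1 sm by (rule diff_mono)
  finally have mixing: "\<kappa> * r \<le> r\<^sup>2 * (Dm / (D1 + Dm)) * (s1 - sm)"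
    using weighted_gap_ge[OF D1 Dm ratio[folded r_def] r] \<kappa> by simp
  have drift: "a\<^sup>2 * X / b2 \<le> \<kappa> * r / (2 * \<beta>)"
  proof (cases "X \<le> 0")
    case True
    then show ?thesis
      using \<kappa> r \<beta> b2 by (simp add: divide_nonpos_pos mult_nonneg_nonpos order.trans[of _ 0])
  next
    case False
    have "a\<^sup>2 * X \<le> a * X"
      using a False by (simp add: power2_eq_square)
    also have "\<dots> \<le> a * (\<alpha> * r / (2 * \<beta>))"
      using X a by (intro mult_left_mono) (auto simp: r_def)
    finally show ?thesis
      using b2 by (simp add: \<kappa>_def divide_right_mono field_simps)
  qed
  have "a * \<alpha> - X \<le> s1 * b2"
    using s1 b2(2) by (simp add: pos_divide_le_eq)
  then have "a * \<alpha> - a\<^sup>2 * X \<le> (X + s1) * b2"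
    unfolding b2(1) by (simp add: algebra_simps)
  then have "\<kappa> - a\<^sup>2 * X / b2 \<le> X + s1"
    using b2(2) by (simp add: \<kappa>_def pos_divide_le_eq diff_divide_distrib[symmetric])
  moreover have "X + (w + 1) * s1 - w * ((D1 * s1 + Dm * sm) / (D1 + Dm))
      = X + s1 + r\<^sup>2 * (Dm / (D1 + Dm)) * (s1 - sm)"
    using D1 Dm by (simp add: w_eq field_simps)
  moreover have "\<kappa> * r / (2 * \<beta>) \<le> \<kappa> * r / 2"
    using \<kappa> r \<beta> by (intro divide_left_mono) auto
  moreover have "a * \<alpha> * sqrt w / (2 * \<beta> * b2) = \<kappa> * r / (2 * \<beta>)"
    by (simp add: \<kappa>_def r_def)
  ultimately show ?thesis
    using mixing drift \<kappa> r by linarith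
qed

theorem lemma3p2:
  fixes p1 pm1 :: "real \<Rightarrow> real" and \<alpha>1 \<alpha>2 \<beta> T w t :: real and x :: "real \<Rightarrow> real"
  assumes "0 < \<alpha>1" and "\<alpha>1 < \<alpha>2" and "1 \<le> \<beta>" and "0 < T"
    and "is_density p1" and "is_density pm1"
    and "\<forall>y. y \<notin> {\<alpha>1..\<alpha>2} \<longrightarrow> p1 y = 0"
    and "\<forall>y. y \<notin> {-\<alpha>2..-\<alpha>1} \<longrightarrow> pm1 y = 0"
    and "\<forall>x1 \<in> {-\<alpha>2<..<-\<alpha>1}. \<forall>x2 \<in> {\<alpha>1<..<\<alpha>2}.
           1/\<beta> \<le> pm1 x1 / p1 x2 \<and> pm1 x1 / p1 x2 \<le> \<beta>"
    and "1 \<le> w"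
    and "\<alpha>2\<^sup>2 \<le> ln w / 4" and "\<alpha>1 * sqrt w \<ge> ln w"
    and ode: "\<forall>s \<in> {0..<T}.
           (x has_real_derivative guided_field p1 pm1 T w s (x s)) (at s within {0..<T})"
    and "t \<in> {0..<T}" and "(sched_a T t)\<^sup>2 \<le> 1/2"
    and "x t \<le> min (ln w / (16 * \<alpha>2)) (\<alpha>1 * sqrt w / (2 * \<beta>))"
  shows "guided_field p1 pm1 T w t (x t)
           \<ge> sched_a T t * \<alpha>1 * sqrt w / (2 * \<beta> * (sched_b T t)\<^sup>2)"
proof -
  note \<alpha> = assms(1,2) and p1 = assms(5) and pm1 = assms(6)
  have supp1: "\<alpha>1 \<le> y \<and> y \<le> \<alpha>2" if "p1 y \<noteq> 0" for y
    using assms(7) that by auto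
  have suppm1: "-\<alpha>2 \<le> y \<and> y \<le> -\<alpha>1" if "pm1 y \<noteq> 0" for y
    using assms(8) that by auto
  define a b X where "a = sched_a T t" and "b = sched_b T t" and "X = x t"
  have a: "0 < a" "a \<le> 1" "a\<^sup>2 \<le> 1/2"
    using assms(14,15) by (simp_all add: a_def sched_a_def)
  have b: "0 < b" "b\<^sup>2 = 1 - a\<^sup>2"
    using a(3) by (simp_all add: b_def sched_b_def a_def)
  have cond: "cond_density_t q T t = noised_density q a b" for q
    by (simp add: fun_eq_iff cond_density_t_def a_def b_def)
  have "(a * \<alpha>1 - X) / b\<^sup>2 \<le> score (noised_density p1 a b) X"
    using supp1 a(1) b by (intro score_noised_density_ge[OF p1]) auto
  moreover have "score (noised_density pm1 a b) X \<le> (- a * \<alpha>1 - X) / b\<^sup>2"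
    using score_noised_density_le[OF pm1, of a b "- \<alpha>1" X] suppm1 a(1) b by auto
  moreover have "noised_density p1 a b X \<le> sqrt w * noised_density pm1 a b X"
    using a b \<alpha> assms(10,11,16)
    by (intro noised_density_ratio_le_sqrt[OF p1 pm1]) (auto simp: X_def dest: supp1 suppm1)
  ultimately have "a * \<alpha>1 * sqrt w / (2 * \<beta> * b\<^sup>2) \<le> guided_field p1 pm1 T w t X"
    using noised_density_pos[OF p1 b(1)] noised_density_pos[OF pm1 b(1)] a b \<alpha> assms(3,10,16)
    unfolding guided_field_eq_scores[OF p1 pm1 b(1)[unfolded b_def]] cond a_def[symmetric] b_def[symmetric]
    by (intro guided_score_combination_ge) (auto simp: X_def)
  then show ?thesis
    by (simp add: a_def b_def X_def)
qed

end
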